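(* Let $G$ be a connected graph of order $n\ge 2$, and let $H$ be a graph of order $m\ge 1$. (a) If $n\ge 4$, then $O_{\rm SR}(G\odot H)=\mathcal{B}$. (b) If $n=3$, then $O_{\rm SR}(G\odot H)=\mathcal{N}$ if $m=1$ and $O_{\rm SR}(G\odot H)=\mathcal{B}$ if $m\ge 2$. (c) If $n=2$, then $O_{\rm SR}(G\odot H)=\mathcal{M}$ if $m=1$ and $O_{\rm SR}(G\odot H)=\mathcal{B}$ if $m\ge 2$.
   Context: All graphs are finite, simple and undirected. For graphs $G$ with $V(G)=\{u_1,\dots,u_n\}$ and $H$, the corona product $G\odot H$ is obtained from $G$ and $n$ disjoint copies $H_1,\dots,H_n$ of $H$ by adding an edge from $u_i$ to every vertex of $H_i$ for each $i$. A set $S\subseteq V(X)$ is a strong resolving set of a connected graph $X$ if for all distinct $x,y\in V(X)$ there exists $z\in S$ such that $x$ lies on a $y$–$z$ geodesic or $y$ lies on an $x$–$z$ geodesic. The Maker–Breaker strong resolving game on $X$: Maker and Breaker alternately select a not-yet-chosen vertex of $X$; Maker wins if the vertices he selects contain a strong resolving set of $X$, Breaker wins otherwise. In the M-game Maker moves first, in the B-game Breaker moves first. $O_{\rm SR}(X)=\mathcal{M}$ if Maker has a winning strategy in both games, $\mathcal{B}$ if Breaker has a winning strategy in both, and $\mathcal{N}$ if the first player has a winning strategy in each. *)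

theory Defs
  imports Main
begin

definition simple_graph :: "'a set \<Rightarrow> ('a \<Rightarrow> 'a \<Rightarrow> bool) \<Rightarrow> bool" where
  "simple_graph V E \<longleftrightarrow> finite V \<and> (\<forall>x y. E x y \<longrightarrow> x \<in> V \<and> y \<in> V)
     \<and> (\<forall>x y. E x y \<longrightarrow> E y x) \<and> (\<forall>x. \<not> E x x)"

definition walk :: "'a set \<Rightarrow> ('a \<Rightarrow> 'a \<Rightarrow> bool) \<Rightarrow> 'a list \<Rightarrow> bool" where
  "walk V E p \<longleftrightarrow> p \<noteq> [] \<and> set p \<subseteq> V \<and> (\<forall>i. Suc i < length p \<longrightarrow> E (p ! i) (p ! Suc i))"

definition connected_graph :: "'a set \<Rightarrow> ('a \<Rightarrow> 'a \<Rightarrow> bool) \<Rightarrow> bool" where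
  "connected_graph V E \<longleftrightarrow> V \<noteq> {} \<and>
     (\<forall>x\<in>V. \<forall>y\<in>V. \<exists>p. walk V E p \<and> hd p = x \<and> last p = y)"

definition gdist :: "'a set \<Rightarrow> ('a \<Rightarrow> 'a \<Rightarrow> bool) \<Rightarrow> 'a \<Rightarrow> 'a \<Rightarrow> nat" where
  "gdist V E x y = (LEAST k. \<exists>p. walk V E p \<and> hd p = x \<and> last p = y \<and> length p = Suc k)"

definition geodesic :: "'a set \<Rightarrow> ('a \<Rightarrow> 'a \<Rightarrow> bool) \<Rightarrow> 'a list \<Rightarrow> 'a \<Rightarrow> 'a \<Rightarrow> bool" where
  "geodesic V E p y z \<longleftrightarrow> walk V E p \<and> hd p = y \<and> last p = z \<and> length p = Suc (gdist V E y z)"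

definition on_geodesic :: "'a set \<Rightarrow> ('a \<Rightarrow> 'a \<Rightarrow> bool) \<Rightarrow> 'a \<Rightarrow> 'a \<Rightarrow> 'a \<Rightarrow> bool" where
  "on_geodesic V E x y z \<longleftrightarrow> (\<exists>p. geodesic V E p y z \<and> x \<in> set p)"

definition strong_resolving_set :: "'a set \<Rightarrow> ('a \<Rightarrow> 'a \<Rightarrow> bool) \<Rightarrow> 'a set \<Rightarrow> bool" where
  "strong_resolving_set V E S \<longleftrightarrow> S \<subseteq> V \<and>
     (\<forall>x\<in>V. \<forall>y\<in>V. x \<noteq> y \<longrightarrow> (\<exists>z\<in>S. on_geodesic V E x y z \<or> on_geodesic V E y x z))"

text \<open>Corona product G \<odot> H: vertices Inl u (u in G) and Inr (u,h) (vertex h of the copy H_u).\<close>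
definition corona_V :: "'a set \<Rightarrow> 'b set \<Rightarrow> ('a + 'a \<times> 'b) set" where
  "corona_V VG VH = Inl ` VG \<union> Inr ` (VG \<times> VH)"

fun corona_E :: "'a set \<Rightarrow> ('a \<Rightarrow> 'a \<Rightarrow> bool) \<Rightarrow> 'b set \<Rightarrow> ('b \<Rightarrow> 'b \<Rightarrow> bool)
    \<Rightarrow> ('a + 'a \<times> 'b) \<Rightarrow> ('a + 'a \<times> 'b) \<Rightarrow> bool" where
  "corona_E VG EG VH EH (Inl u) (Inl v) = EG u v"
| "corona_E VG EG VH EH (Inl u) (Inr (v, h)) = (u = v \<and> u \<in> VG \<and> h \<in> VH)"
| "corona_E VG EG VH EH (Inr (v, h)) (Inl u) = (u = v \<and> u \<in> VG \<and> h \<in> VH)"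
| "corona_E VG EG VH EH (Inr (u, h)) (Inr (v, k)) = (u = v \<and> u \<in> VG \<and> EH h k)"

text \<open>Maker-Breaker game on board X with winning sets W (Maker wins iff his final set
  contains a set satisfying W).  maker_wins k mturn X M B: with k free vertices left,
  Maker has chosen M, Breaker B, and mturn says whether Maker moves next; true iff
  Maker has a winning strategy from this position (finite game, evaluated by minimax).\<close>
fun maker_wins :: "nat \<Rightarrow> bool \<Rightarrow> ('a set \<Rightarrow> bool) \<Rightarrow> 'a set \<Rightarrow> 'a set \<Rightarrow> 'a set \<Rightarrow> bool" where
  "maker_wins 0 mturn W X M B = (\<exists>S\<subseteq>M. W S)"
| "maker_wins (Suc k) mturn W X M B =
     (if mturn then (\<exists>x\<in>X - (M \<union> B). maker_wins k False W X (insert x M) B)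
      else (\<forall>x\<in>X - (M \<union> B). maker_wins k True W X M (insert x B)))"

definition maker_wins_M_game :: "('a set \<Rightarrow> bool) \<Rightarrow> 'a set \<Rightarrow> bool" where
  "maker_wins_M_game W X = maker_wins (card X) True W X {} {}"

definition maker_wins_B_game :: "('a set \<Rightarrow> bool) \<Rightarrow> 'a set \<Rightarrow> bool" where
  "maker_wins_B_game W X = maker_wins (card X) False W X {} {}"

datatype outcome = Out_M | Out_B | Out_N | Out_P

text \<open>Outcome (finite games are determined: Breaker wins iff Maker does not).
  Out_P (second player wins both) is included for totality.\<close>
definition game_outcome :: "('a set \<Rightarrow> bool) \<Rightarrow> 'a set \<Rightarrow> outcome" where
  "game_outcome W X =
    (if maker_wins_M_game W X \<and> maker_wins_B_game W X then Out_M
     else if \<not> maker_wins_M_game W X \<and> \<not> maker_wins_B_game W X then Out_B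
     else if maker_wins_M_game W X \<and> \<not> maker_wins_B_game W X then Out_N
     else Out_P)"

definition O_SR :: "'a set \<Rightarrow> ('a \<Rightarrow> 'a \<Rightarrow> bool) \<Rightarrow> outcome" where
  "O_SR V E = game_outcome (strong_resolving_set V E) V"

end

theory Submission
  imports Defs
begin

text \<open>Two mutually maximally distant vertices of a graph can never both be omitted from a strong
  resolving set, so Breaker wins as soon as he owns such a pair. In G \<odot> H, vertices in
  different copies of H are mutually maximally distant (a geodesic enters a copy through its
  root, so it cannot pass through the copy), and for m = 2 so are the two vertices of one copy.
  Breaker claims a vertex y of a copy and then a partner of y that Maker has not taken; this
  works in the B-game if y has at least (n - 1) m \<ge> 2 partners and in the M-game if it has at
  least 3, which covers all cases except m = 1 with n \<le> 3. For m = 1 every root lies on all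
  geodesics ending at its leaf, so all leaves but one form a strong resolving set, and Maker,
  by claiming leaves, leaves Breaker at most one of them exactly when n \<le> 3 in the M-game and
  n = 2 in the B-game.\<close>

section \<open>Walks and geodesics\<close>

lemma walk_iff_successively:
  "walk V E p \<longleftrightarrow> p \<noteq> [] \<and> set p \<subseteq> V \<and> successively E p"
  by (simp add: walk_def successively_conv_nth)

lemma walk_rev_iff: "walk V E (rev p) \<longleftrightarrow> walk V (\<lambda>x y. E y x) p"
  by (simp add: walk_iff_successively)

lemma walk_take: "walk V E p \<Longrightarrow> walk V E (take (Suc i) p)"
  using successively_append_iff[of E "take (Suc i) p" "drop (Suc i) p"] set_take_subset[of "Suc i" p]
  by (auto simp: walk_iff_successively)

lemma walk_drop: "walk V E p \<Longrightarrow> i < length p \<Longrightarrow> walk V E (drop i p)"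
  using successively_append_iff[of E "take i p" "drop i p"] set_drop_subset[of i p]
  by (auto simp: walk_iff_successively)

lemma walk_append:
  "walk V E p \<Longrightarrow> walk V E q \<Longrightarrow> E (last p) (hd q) \<Longrightarrow> walk V E (p @ q)"
  by (auto simp: walk_iff_successively successively_append_iff)

lemma walk_glue:
  assumes "walk V E p" "walk V E q" "last p = hd q"
  shows "walk V E (p @ tl q)"
proof (cases q)
  case Nil
  then show ?thesis using assms(2) by (simp add: walk_def)
next
  case (Cons a r)
  show ?thesis
  proof (cases r)
    case Nil
    then show ?thesis using assms(1) Cons by simp
  next
    case (Cons b s)
    then show ?thesis
      using assms \<open>q = a # r\<close> by (auto simp: walk_iff_successively successively_append_iff)
  qed
qed

lemma geodesic_length_le:
  assumes "geodesic V E p y z" "walk V E q" "hd q = y" "last q = z"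
  shows "length p \<le> length q"
proof -
  have "gdist V E y z \<le> length q - 1"
    unfolding gdist_def using assms(2-4) by (intro Least_le) (auto simp: walk_def)
  moreover have "0 < length q" using assms(2) by (simp add: walk_def)
  ultimately show ?thesis using assms(1) unfolding geodesic_def by linarith
qed

definition joined :: "'a set \<Rightarrow> ('a \<Rightarrow> 'a \<Rightarrow> bool) \<Rightarrow> 'a \<Rightarrow> 'a \<Rightarrow> bool" where
  "joined V E x y \<longleftrightarrow> (\<exists>p. walk V E p \<and> hd p = x \<and> last p = y)"

lemma connected_graph_iff_joined:
  "connected_graph V E \<longleftrightarrow> V \<noteq> {} \<and> (\<forall>x\<in>V. \<forall>y\<in>V. joined V E x y)"
  by (simp add: connected_graph_def joined_def)

lemma joined_trans:
  assumes "joined V E x y" "joined V E y z"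
  shows "joined V E x z"
proof -
  obtain p q where p: "walk V E p" "hd p = x" "last p = y" and q: "walk V E q" "hd q = y" "last q = z"
    using assms unfolding joined_def by blast
  have "walk V E (p @ tl q)" using walk_glue[OF p(1) q(1)] p(3) q(2) by simp
  moreover have "p \<noteq> []" "q \<noteq> []" using p(1) q(1) by (simp_all add: walk_def)
  then have "hd (p @ tl q) = x" "last (p @ tl q) = z"
    using p(2,3) q(2,3) by (simp, cases q, auto)
  ultimately show ?thesis unfolding joined_def by blast
qed

lemma geodesic_exists:
  assumes "joined V E y z"
  shows "\<exists>p. geodesic V E p y z"
proof -
  obtain q where "walk V E q" "hd q = y" "last q = z" using assms unfolding joined_def by blast
  then have "\<exists>k p. walk V E p \<and> hd p = y \<and> last p = z \<and> length p = Suc k"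
    by (intro exI[of _ "length q - 1"] exI[of _ q]) (auto simp: walk_def)
  from LeastI_ex[OF this] show ?thesis unfolding geodesic_def gdist_def by blast
qed

lemma geodesic_no_chord:
  assumes g: "geodesic V E p y z" and ij: "Suc i < j" "j < length p"
  shows "\<not> E (p ! i) (p ! j)"
proof
  assume chord: "E (p ! i) (p ! j)"
  let ?q = "take (Suc i) p @ drop j p"
  have w: "walk V E p" "hd p = y" "last p = z" using g by (auto simp: geodesic_def)
  have "last (take (Suc i) p) = p ! i" "hd (drop j p) = p ! j"
    using ij by (simp_all add: take_Suc_conv_app_nth hd_drop_conv_nth)
  then have "walk V E ?q"
    using walk_append[OF walk_take[OF w(1)] walk_drop[OF w(1)]] chord ij by simp
  moreover have "hd ?q = y" "last ?q = z" using w ij by (auto simp: walk_def hd_append)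
  ultimately have "length p \<le> length ?q" by (rule geodesic_length_le[OF g])
  then show False using ij by simp
qed

lemma geodesic_distinct:
  assumes g: "geodesic V E p y z"
  shows "distinct p"
proof -
  have w: "walk V E p" "hd p = y" "last p = z" using g by (auto simp: geodesic_def)
  have "p ! i \<noteq> p ! j" if ij: "i < j" "j < length p" for i j
  proof
    assume rep: "p ! i = p ! j"
    let ?q = "take (Suc i) p @ tl (drop j p)"
    have last_take: "last (take (Suc i) p) = p ! j"
      using ij rep by (simp add: take_Suc_conv_app_nth)
    then have "walk V E ?q"
      using walk_glue[OF walk_take[OF w(1)] walk_drop[OF w(1)]] ij by (simp add: hd_drop_conv_nth)
    moreover have "hd ?q = y" using w ij by (auto simp: walk_def hd_append)
    moreover have "last ?q = z"
    proof (cases "Suc j = length p")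
      case True
      then have "tl (drop j p) = []" by (simp add: drop_Suc tl_drop)
      moreover have "last p = p ! j" using True w(1) by (simp add: last_conv_nth walk_def True[symmetric])
      ultimately show ?thesis using last_take w(3) by simp
    next
      case False
      then have "tl (drop j p) = drop (Suc j) p" "Suc j < length p"
        using ij by (simp_all add: drop_Suc tl_drop)
      then show ?thesis using w(3) by simp
    qed
    ultimately have "length p \<le> length ?q" by (rule geodesic_length_le[OF g])
    then show False using ij by simp
  qed
  then show ?thesis by (metis distinct_conv_nth linorder_neqE_nat)
qed

lemma interior_vertex_index:
  assumes "x \<in> set p" "x \<noteq> hd p" "x \<noteq> last p"
  obtains k where "0 < k" "Suc k < length p" "p ! k = x"
proof -
  obtain k where k: "k < length p" "p ! k = x" using assms(1) by (auto simp: in_set_conv_nth)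
  have "p \<noteq> []" using assms(1) by auto
  then have "k \<noteq> 0" "Suc k \<noteq> length p"
    using k assms(2,3) by (metis hd_conv_nth, metis diff_Suc_1 last_conv_nth)
  then show ?thesis using that k by simp
qed

lemma connected_graph_geodesic_exists:
  "connected_graph V E \<Longrightarrow> y \<in> V \<Longrightarrow> z \<in> V \<Longrightarrow> \<exists>p. geodesic V E p y z"
  using geodesic_exists connected_graph_iff_joined by metis

lemma on_geodesic_endpoint:
  assumes "connected_graph V E" "y \<in> V" "z \<in> V"
  shows "on_geodesic V E z y z"
proof -
  obtain p where "geodesic V E p y z" using connected_graph_geodesic_exists[OF assms] by blast
  then show ?thesis unfolding on_geodesic_def geodesic_def walk_def by (metis last_in_set)
qed

lemma walk_from_pendant_vertex:
  assumes "walk V E p" "hd p = l" "last p \<noteq> l" and pendant: "\<And>b. E l b \<Longrightarrow> b = u"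
  shows "u \<in> set p"
proof -
  obtain q where p: "p = l # q" "q \<noteq> []"
    using assms(1-3) by (cases p) (auto simp: walk_def split: if_splits)
  then have "E l (hd q)" using assms(1) by (simp add: walk_iff_successively successively_Cons)
  then show ?thesis using pendant p by simp
qed

lemma walk_to_pendant_vertex:
  assumes "walk V E p" "last p = l" "hd p \<noteq> l" and pendant: "\<And>a. E a l \<Longrightarrow> a = u"
  shows "u \<in> set p"
proof -
  have "walk V (\<lambda>x y. E y x) (rev p)" using assms(1) by (simp add: walk_rev_iff)
  moreover have "p \<noteq> []" using assms(1) by (simp add: walk_def)
  ultimately show ?thesis
    using walk_from_pendant_vertex[of V _ "rev p" l u] assms by (simp add: hd_rev last_rev)
qed

lemma on_geodesic_from_pendant_vertex:
  assumes "connected_graph V E" "l \<in> V" "z \<in> V" "z \<noteq> l" "\<And>b. E l b \<Longrightarrow> b = u"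
  shows "on_geodesic V E u l z"
proof -
  obtain p where "geodesic V E p l z" using connected_graph_geodesic_exists[OF assms(1-3)] by blast
  then show ?thesis
    using walk_from_pendant_vertex[of V E p l u] assms(4,5) by (auto simp: on_geodesic_def geodesic_def)
qed

lemma on_geodesic_to_pendant_vertex:
  assumes "connected_graph V E" "y \<in> V" "l \<in> V" "y \<noteq> l" "\<And>a. E a l \<Longrightarrow> a = u"
  shows "on_geodesic V E u y l"
proof -
  obtain p where "geodesic V E p y l" using connected_graph_geodesic_exists[OF assms(1-3)] by blast
  then show ?thesis
    using walk_to_pendant_vertex[of V E p l u] assms(4,5) by (auto simp: on_geodesic_def geodesic_def)
qed

text \<open>For connected graphs this is the usual notion: no neighbour of x is farther from y than x.\<close>
definition maximally_distant :: "'a set \<Rightarrow> ('a \<Rightarrow> 'a \<Rightarrow> bool) \<Rightarrow> 'a \<Rightarrow> 'a \<Rightarrow> bool" where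
  "maximally_distant V E x y \<longleftrightarrow> (\<forall>z. on_geodesic V E x y z \<longrightarrow> z = x)"

lemma strong_resolving_set_mutually_maximally_distant:
  assumes "strong_resolving_set V E S" "x \<in> V" "y \<in> V" "x \<noteq> y"
    and "maximally_distant V E x y" "maximally_distant V E y x"
  shows "x \<in> S \<or> y \<in> S"
  using assms unfolding strong_resolving_set_def maximally_distant_def by blast

section \<open>Maker-Breaker games\<close>

definition transversal :: "('a set \<Rightarrow> bool) \<Rightarrow> 'a set \<Rightarrow> bool" where
  "transversal W T \<longleftrightarrow> (\<forall>S. W S \<longrightarrow> S \<inter> T \<noteq> {})"

definition blocking_partners :: "('a set \<Rightarrow> bool) \<Rightarrow> 'a set \<Rightarrow> 'a \<Rightarrow> 'a set" where
  "blocking_partners W F y = {y' \<in> F - {y}. transversal W {y, y'}}"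

lemma card_free_insert:
  assumes "finite X" "x \<in> X - (M \<union> B)" "card (X - (M \<union> B)) = Suc k"
  shows "card (X - (insert x M \<union> B)) = k" "card (X - (M \<union> insert x B)) = k"
proof -
  have "X - (insert x M \<union> B) = (X - (M \<union> B)) - {x}"
    "X - (M \<union> insert x B) = (X - (M \<union> B)) - {x}"
    by auto
  then show "card (X - (insert x M \<union> B)) = k" "card (X - (M \<union> insert x B)) = k"
    using assms by simp_all
qed

lemma not_maker_wins_if_breaker_holds_transversal:
  assumes fin: "finite X" and T: "transversal W T"
  shows "card (X - (M \<union> B)) = k \<Longrightarrow> T \<subseteq> B \<Longrightarrow> T \<inter> M = {} \<Longrightarrow> \<not> maker_wins k t W X M B"
proof (induction k arbitrary: M B t)
  case 0
  then show ?case using T unfolding transversal_def by (simp, blast)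
next
  case (Suc k)
  show ?case
  proof (cases t)
    case True
    have "\<not> maker_wins k False W X (insert x M) B" if "x \<in> X - (M \<union> B)" for x
      using Suc.IH card_free_insert[OF fin that Suc.prems(1)] Suc.prems that by blast
    then show ?thesis using True by simp
  next
    case False
    obtain x where x: "x \<in> X - (M \<union> B)"
      using Suc.prems(1) by (metis card.empty ex_in_conv nat.distinct(1))
    have "\<not> maker_wins k True W X M (insert x B)"
      using Suc.IH card_free_insert[OF fin x Suc.prems(1)] Suc.prems by blast
    then show ?thesis using False x by auto
  qed
qed

lemma not_maker_wins_by_pairing:
  assumes fin: "finite X" and k: "card (X - (M \<union> B)) = k" and y: "y \<in> X - (M \<union> B)"
    and partners: "2 \<le> card (blocking_partners W (X - (M \<union> B)) y)"
  shows "\<not> maker_wins k False W X M B"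
proof -
  let ?F = "X - (M \<union> B)" and ?P = "blocking_partners W (X - (M \<union> B)) y"
  have P: "?P \<subseteq> ?F - {y}" "finite ?P"
    using fin finite_subset[of ?P X] by (auto simp: blocking_partners_def)
  have "insert y ?P \<subseteq> ?F" using P(1) y by auto
  then have "card (insert y ?P) \<le> k" using k fin by (metis card_mono finite_Diff)
  moreover have "card (insert y ?P) = Suc (card ?P)" using P by (subst card_insert_disjoint) auto
  ultimately have "k = Suc (Suc (Suc (k - 3)))" using partners by linarith
  then obtain j where j: "k = Suc (Suc (Suc j))" by blast
  have "\<not> maker_wins (Suc j) False W X (insert x M) (insert y B)"
    if x: "x \<in> X - (M \<union> insert y B)" for x
  proof -
    have "\<not> ?P \<subseteq> {x}"
    proof
      assume "?P \<subseteq> {x}"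
      then have "card ?P \<le> 1" using card_mono[of "{x}" ?P] by simp
      then show False using partners by simp
    qed
    then obtain y' where y': "y' \<in> ?P" "y' \<noteq> x" by blast
    have y'_free: "y' \<in> X - (insert x M \<union> insert y B)" using y' P(1) by auto
    have T: "transversal W {y, y'}" using y' by (simp add: blocking_partners_def)
    have "card (X - (M \<union> insert y B)) = Suc (Suc j)" using card_free_insert(2)[OF fin y] k j by simp
    then have "card (X - (insert x M \<union> insert y B)) = Suc j" using card_free_insert(1)[OF fin x] by simp
    then have "card (X - (insert x M \<union> insert y' (insert y B))) = j"
      using card_free_insert(2)[OF fin y'_free] by simp
    then have "\<not> maker_wins j True W X (insert x M) (insert y' (insert y B))"
      by (rule not_maker_wins_if_breaker_holds_transversal[OF fin T]) (use x y y' P(1) in auto)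
    then show ?thesis using y'_free by auto
  qed
  then have "\<not> maker_wins (Suc (Suc j)) True W X M (insert y B)" by simp
  then show ?thesis using y j by auto
qed

lemma breaker_wins_B_game_by_pairing:
  assumes "finite X" "y \<in> X" "2 \<le> card (blocking_partners W X y)"
  shows "\<not> maker_wins_B_game W X"
  using not_maker_wins_by_pairing[of X "{}" "{}"] assms by (simp add: maker_wins_B_game_def)

lemma breaker_wins_M_game_by_pairing:
  assumes fin: "finite X" and "X \<noteq> {}"
    and pairing: "\<forall>x\<in>X. \<exists>y\<in>X - {x}. 3 \<le> card (blocking_partners W X y)"
  shows "\<not> maker_wins_M_game W X"
proof -
  obtain k where k: "card X = Suc k" using assms(1,2) by (metis card_gt_0_iff gr0_implies_Suc)
  have "\<not> maker_wins k False W X {x} {}" if x: "x \<in> X" for x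
  proof -
    obtain y where y: "y \<in> X - {x}" "3 \<le> card (blocking_partners W X y)" using pairing x by blast
    have "blocking_partners W (X - {x}) y = blocking_partners W X y - {x}"
      by (auto simp: blocking_partners_def)
    then have "2 \<le> card (blocking_partners W (X - ({x} \<union> {})) y)"
      using y(2) by (cases "x \<in> blocking_partners W X y") (simp_all add: card_Diff_singleton_if)
    moreover have "card (X - ({x} \<union> {})) = k" using k x fin by simp
    ultimately show ?thesis using not_maker_wins_by_pairing[OF fin] y(1) by blast
  qed
  then show ?thesis unfolding maker_wins_M_game_def k by simp
qed

text \<open>Maker's strategy is to claim free elements of L as long as there are any; then Breaker
  obtains at most half of the free elements of L.\<close>
lemma maker_wins_by_claiming:
  assumes fin: "finite X" and L: "L \<subseteq> X"
    and wins: "\<And>M'. card (L - M') \<le> r \<Longrightarrow> \<exists>S\<subseteq>M'. W S"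
  shows "card (X - (M \<union> B)) = k \<Longrightarrow>
    card (B \<inter> L) + (card ((X - (M \<union> B)) \<inter> L) + (if t then 0 else 1)) div 2 \<le> r \<Longrightarrow>
    maker_wins k t W X M B"
proof (induction k arbitrary: M B t)
  case 0
  then have "L - M \<subseteq> B \<inter> L" using fin L by auto
  then have "card (L - M) \<le> r"
    using 0 fin L by (meson card_mono finite_Int finite_subset le_trans le_add1)
  then show ?case using wins by simp
next
  case (Suc k)
  let ?F = "X - (M \<union> B)"
  have finL: "finite (?F \<inter> L)" "finite (B \<inter> L)" using fin L finite_subset by blast+
  have free_after: "(X - (insert z M \<union> B)) \<inter> L = ?F \<inter> L - {z}"
    "(X - (M \<union> insert z B)) \<inter> L = ?F \<inter> L - {z}" for z
    by auto
  show ?case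
  proof (cases t)
    case True
    obtain z where z: "z \<in> ?F" "?F \<inter> L \<noteq> {} \<Longrightarrow> z \<in> L"
      using Suc.prems(1) by (metis IntE card.empty ex_in_conv nat.distinct(1))
    have "card (B \<inter> L) + (card (?F \<inter> L - {z}) + 1) div 2 \<le> r"
      using Suc.prems(2) True z finL by (cases "?F \<inter> L = {}") (auto simp: card_Diff_singleton)
    then have "maker_wins k False W X (insert z M) B"
      using Suc.IH card_free_insert(1)[OF fin z(1) Suc.prems(1)] free_after by simp
    then show ?thesis using True z(1) by auto
  next
    case False
    have "maker_wins k True W X M (insert z B)" if z: "z \<in> ?F" for z
    proof -
      have "card (insert z B \<inter> L) + card (?F \<inter> L - {z}) div 2 \<le> r"
      proof (cases "z \<in> L")
        case True
        have "?F \<inter> L \<noteq> {}" using z True by blast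
        then have "card (insert z B \<inter> L) = Suc (card (B \<inter> L))" "card (?F \<inter> L) \<ge> 1"
          using z True finL by (simp_all add: Suc_le_eq card_gt_0_iff)
        then show ?thesis
          using Suc.prems(2) False z True finL by (simp add: card_Diff_singleton)
      next
        case False
        then show ?thesis using Suc.prems(2) \<open>\<not> t\<close> by simp
      qed
      then show ?thesis
        using Suc.IH card_free_insert(2)[OF fin z Suc.prems(1)] free_after by simp
    qed
    then show ?thesis using False by simp
  qed
qed

lemma maker_wins_game_by_claiming:
  assumes "finite X" "L \<subseteq> X" "\<And>M'. card (L - M') \<le> r \<Longrightarrow> \<exists>S\<subseteq>M'. W S"
    and "(card L + (if t then 0 else 1)) div 2 \<le> r"
  shows "maker_wins (card X) t W X {} {}"
  using maker_wins_by_claiming[OF assms(1-3)] assms(2,4) by (simp add: Int_absorb1)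

section \<open>Corona products\<close>

locale corona =
  fixes VG :: "'a set" and EG :: "'a \<Rightarrow> 'a \<Rightarrow> bool"
    and VH :: "'b set" and EH :: "'b \<Rightarrow> 'b \<Rightarrow> bool"
begin

abbreviation V :: "('a + 'a \<times> 'b) set" where
  "V \<equiv> corona_V VG VH"

abbreviation E :: "('a + 'a \<times> 'b) \<Rightarrow> ('a + 'a \<times> 'b) \<Rightarrow> bool" where
  "E \<equiv> corona_E VG EG VH EH"

lemma edge_from_copy: "E (Inr (i, h)) b \<Longrightarrow> b = Inl i \<or> (\<exists>k. b = Inr (i, k) \<and> EH h k)"
  by (cases b) auto

lemma edge_into_copy: "E a (Inr (i, h)) \<Longrightarrow> a = Inl i \<or> (\<exists>k. a = Inr (i, k) \<and> EH k h)"
  by (cases a) auto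

lemma edges_to_root: "Inr (i, h) \<in> V \<Longrightarrow> E (Inl i) (Inr (i, h)) \<and> E (Inr (i, h)) (Inl i)"
  by (auto simp: corona_V_def)

lemma walk_enters_copy_through_root:
  assumes w: "walk V E p" and start: "\<forall>h. hd p \<noteq> Inr (i, h)"
  shows "k < length p \<Longrightarrow> p ! k = Inr (i, h) \<Longrightarrow> \<exists>j<k. p ! j = Inl i"
proof (induction k arbitrary: h)
  case 0
  then show ?case using start w by (simp add: hd_conv_nth walk_def)
next
  case (Suc k)
  have "E (p ! k) (p ! Suc k)" using w Suc.prems(1) by (simp add: walk_def)
  then consider "p ! k = Inl i" | h' where "p ! k = Inr (i, h')"
    using edge_into_copy Suc.prems(2) by metis
  then show ?case
  proof cases
    case 1
    then show ?thesis by blast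
  next
    case 2
    then show ?thesis using Suc.IH Suc.prems(1) by (meson Suc_lessD less_SucI)
  qed
qed

lemma copy_vertex_maximally_distant:
  assumes y: "y \<noteq> Inl i" "\<forall>h'. y \<noteq> Inr (i, h')"
  shows "maximally_distant V E (Inr (i, h)) y"
  unfolding maximally_distant_def on_geodesic_def
proof (intro allI impI; elim exE conjE; rule ccontr)
  fix z p
  assume g: "geodesic V E p y z" and x: "Inr (i, h) \<in> set p" and "z \<noteq> Inr (i, h)"
  have w: "walk V E p" "hd p = y" "last p = z" using g by (auto simp: geodesic_def)
  have "Inr (i, h) \<noteq> hd p" "Inr (i, h) \<noteq> last p" using w y(2) \<open>z \<noteq> Inr (i, h)\<close> by metis+
  then obtain k where k: "0 < k" "Suc k < length p" "p ! k = Inr (i, h)"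
    using interior_vertex_index[OF x] by blast
  have "\<forall>h'. hd p \<noteq> Inr (i, h')" using w(2) y(2) by simp
  then obtain j where j: "j < k" "p ! j = Inl i"
    using walk_enters_copy_through_root[OF w(1), of i k h] k by auto
  have next_in_V: "p ! Suc k \<in> V" using w(1) k by (auto simp: walk_def)
  have "E (p ! k) (p ! Suc k)" using w(1) k(2) unfolding walk_def by blast
  then consider "p ! Suc k = Inl i" | h' where "p ! Suc k = Inr (i, h')"
    using edge_from_copy k(3) by metis
  then show False
  proof cases
    case 1
    then show False using nth_eq_iff_index_eq[OF geodesic_distinct[OF g], of j "Suc k"] j k by simp
  next
    case 2
    then have "E (p ! j) (p ! Suc k)" using edges_to_root next_in_V j by simp
    then show False using geodesic_no_chord[OF g, of j "Suc k"] j(1) k(2) by simp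
  qed
qed

lemma twin_copy_vertex_maximally_distant:
  assumes "h \<noteq> h'" and twin: "\<forall>k. EH h k \<longrightarrow> k = h'"
  shows "maximally_distant V E (Inr (i, h)) (Inr (i, h'))"
  unfolding maximally_distant_def on_geodesic_def
proof (intro allI impI; elim exE conjE; rule ccontr)
  fix z p
  assume g: "geodesic V E p (Inr (i, h')) z" and x: "Inr (i, h) \<in> set p" and "z \<noteq> Inr (i, h)"
  have w: "walk V E p" "hd p = Inr (i, h')" "last p = z" using g by (auto simp: geodesic_def)
  have "Inr (i, h) \<noteq> hd p" "Inr (i, h) \<noteq> last p" using w assms(1) \<open>z \<noteq> Inr (i, h)\<close> by auto
  then obtain k where k: "0 < k" "Suc k < length p" "p ! k = Inr (i, h)"
    using interior_vertex_index[OF x] by blast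
  have start: "p ! 0 = Inr (i, h')" "p ! 0 \<in> V"
    using w k nth_mem[of 0 p] by (auto simp: walk_def hd_conv_nth)
  have "E (p ! k) (p ! Suc k)" using w(1) k(2) unfolding walk_def by blast
  then consider "p ! Suc k = Inl i" | "p ! Suc k = Inr (i, h')"
    using edge_from_copy k(3) twin by metis
  then show False
  proof cases
    case 1
    then have "E (p ! 0) (p ! Suc k)" using edges_to_root start by simp
    then show False using geodesic_no_chord[OF g] k by simp
  next
    case 2
    moreover have "0 < length p" using k(2) by linarith
    ultimately show False using nth_eq_iff_index_eq[OF geodesic_distinct[OF g], of 0 "Suc k"] start k(2) by simp
  qed
qed

lemma transversal_other_copies:
  assumes "i \<in> VG" "j \<in> VG" "i \<noteq> j" "h \<in> VH" "h' \<in> VH"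
  shows "transversal (strong_resolving_set V E) {Inr (i, h), Inr (j, h')}"
proof (unfold transversal_def, intro allI impI)
  fix S assume "strong_resolving_set V E S"
  from strong_resolving_set_mutually_maximally_distant[OF this, of "Inr (i, h)" "Inr (j, h')"]
  show "S \<inter> {Inr (i, h), Inr (j, h')} \<noteq> {}"
    using copy_vertex_maximally_distant assms by (auto simp: corona_V_def)
qed

lemma transversal_twins:
  assumes "i \<in> VG" "h \<in> VH" "h' \<in> VH" "h \<noteq> h'"
    and "\<forall>k. EH h k \<longrightarrow> k = h'" "\<forall>k. EH h' k \<longrightarrow> k = h"
  shows "transversal (strong_resolving_set V E) {Inr (i, h), Inr (i, h')}"
proof (unfold transversal_def, intro allI impI)
  fix S assume "strong_resolving_set V E S"
  from strong_resolving_set_mutually_maximally_distant[OF this, of "Inr (i, h)" "Inr (i, h')"]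
  show "S \<inter> {Inr (i, h), Inr (i, h')} \<noteq> {}"
    using twin_copy_vertex_maximally_distant assms by (auto simp: corona_V_def)
qed

lemma other_copies_blocking_partners:
  assumes "i \<in> VG" "h \<in> VH"
  shows "Inr ` ((VG - {i}) \<times> VH) \<subseteq> blocking_partners (strong_resolving_set V E) V (Inr (i, h))"
  using transversal_other_copies assms by (auto simp: blocking_partners_def corona_V_def)

lemma walk_map_Inl: "walk VG EG p \<Longrightarrow> walk V E (map Inl p)"
  by (auto simp: walk_iff_successively successively_map corona_V_def)

lemma joined_Inl: "joined VG EG u v \<Longrightarrow> joined V E (Inl u) (Inl v)"
  unfolding joined_def using walk_map_Inl by (metis hd_map last_map walk_def)

lemma joined_to_root:
  assumes "x \<in> V"
  obtains u where "u \<in> VG" "joined V E x (Inl u)" "joined V E (Inl u) x"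
proof (cases x)
  case (Inl u)
  then have "u \<in> VG" "walk V E [x]" using assms by (auto simp: walk_def corona_V_def)
  then show ?thesis using that Inl unfolding joined_def by fastforce
next
  case (Inr uh)
  then obtain u h where uh: "x = Inr (u, h)" "u \<in> VG" "h \<in> VH" using assms by (auto simp: corona_V_def)
  then have "walk V E [x, Inl u]" "walk V E [Inl u, x]"
    using assms by (auto simp: walk_def corona_V_def nth_Cons split: nat.splits)
  then show ?thesis using that uh(2) unfolding joined_def by fastforce
qed

end

lemma card_ge_2_obtain_other:
  assumes "2 \<le> card A"
  obtains b where "b \<in> A" "b \<noteq> a"
proof -
  have "\<not> A \<subseteq> {a}" using card_mono[of "{a}" A] assms by auto
  then show ?thesis using that by blast
qed

locale connected_corona = corona +
  assumes simple_G: "simple_graph VG EG" and connected_G: "connected_graph VG EG"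
    and simple_H: "simple_graph VH EH"
begin

lemma finite_VG: "finite VG" and finite_VH: "finite VH" and finite_V: "finite V"
  using simple_G simple_H by (auto simp: simple_graph_def corona_V_def)

lemma corona_connected: "connected_graph V E"
  unfolding connected_graph_iff_joined
proof (intro conjI ballI)
  show "V \<noteq> {}" using connected_G by (auto simp: connected_graph_def corona_V_def)
next
  fix x y assume "x \<in> V" "y \<in> V"
  then obtain u v where "u \<in> VG" "joined V E x (Inl u)" "v \<in> VG" "joined V E (Inl v) y"
    using joined_to_root by metis
  moreover have "joined V E (Inl u) (Inl v)"
    using joined_Inl connected_G \<open>u \<in> VG\<close> \<open>v \<in> VG\<close> by (simp add: connected_graph_iff_joined)
  ultimately show "joined V E x y" by (metis joined_trans)
qed

lemma card_blocking_partners: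
  assumes "i \<in> VG" "h \<in> VH"
  shows "(card VG - 1) * card VH + (if card VH = 2 then 1 else 0)
    \<le> card (blocking_partners (strong_resolving_set V E) V (Inr (i, h)))"
proof -
  let ?P = "blocking_partners (strong_resolving_set V E) V (Inr (i, h))"
  let ?O = "Inr ` ((VG - {i}) \<times> VH) :: ('a + 'a \<times> 'b) set"
  have fin: "finite ?P" using finite_V by (simp add: blocking_partners_def)
  have card_O: "card ?O = (card VG - 1) * card VH"
    using assms finite_VG by (simp add: card_image card_cartesian_product)
  show ?thesis
  proof (cases "card VH = 2")
    case True
    then obtain h' where h': "VH = {h, h'}" "h \<noteq> h'"
      using assms(2) by (metis card_2_iff doubleton_eq_iff insertE singletonD)
    then have "\<forall>k. EH h k \<longrightarrow> k = h'" "\<forall>k. EH h' k \<longrightarrow> k = h"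
      using simple_H unfolding simple_graph_def by blast+
    then have "Inr (i, h') \<in> ?P"
      using transversal_twins[of i h h'] assms h' by (auto simp: blocking_partners_def corona_V_def)
    moreover have "Inr (i, h') \<notin> ?O" by auto
    ultimately have "card (insert (Inr (i, h')) ?O) \<le> card ?P"
      using other_copies_blocking_partners[OF assms] fin by (intro card_mono) auto
    moreover have "finite ?O" using finite_VG finite_VH by simp
    ultimately show ?thesis using True card_O \<open>Inr (i, h') \<notin> ?O\<close> by simp
  next
    case False
    then show ?thesis
      using card_mono[OF fin other_copies_blocking_partners[OF assms]] card_O by simp
  qed
qed

lemma corona_breaker_wins_B_game:
  assumes "2 \<le> (card VG - 1) * card VH"
  shows "\<not> maker_wins_B_game (strong_resolving_set V E) V"
proof -
  have "VG \<noteq> {}" "VH \<noteq> {}" using assms by auto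
  then obtain i h where "i \<in> VG" "h \<in> VH" by blast
  moreover have "Inr (i, h) \<in> V" using calculation by (simp add: corona_V_def)
  ultimately show ?thesis
    using breaker_wins_B_game_by_pairing[OF finite_V] card_blocking_partners assms
    by (meson add_leE le_trans)
qed

lemma corona_breaker_wins_M_game:
  assumes "2 \<le> card VG" and partners: "3 \<le> (card VG - 1) * card VH + (if card VH = 2 then 1 else 0)"
  shows "\<not> maker_wins_M_game (strong_resolving_set V E) V"
proof (rule breaker_wins_M_game_by_pairing[OF finite_V])
  have "VG \<noteq> {}" "VH \<noteq> {}" using assms by auto
  then obtain i h where "i \<in> VG" "h \<in> VH" by blast
  moreover obtain j where "j \<in> VG" "j \<noteq> i" using card_ge_2_obtain_other[OF assms(1)] by blast
  ultimately have ijh: "i \<in> VG" "j \<in> VG" "i \<noteq> j" "h \<in> VH" by auto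
  then show "V \<noteq> {}" by (auto simp: corona_V_def)
  show "\<forall>x\<in>V. \<exists>y\<in>V - {x}. 3 \<le> card (blocking_partners (strong_resolving_set V E) V y)"
  proof
    fix x :: "'a + 'a \<times> 'b"
    obtain k where "k \<in> {i, j}" "Inr (k, h) \<noteq> x" using ijh(3) by blast
    then show "\<exists>y\<in>V - {x}. 3 \<le> card (blocking_partners (strong_resolving_set V E) V y)"
      using card_blocking_partners[of k h] partners ijh
      by (intro bexI[of _ "Inr (k, h)"]) (auto simp: corona_V_def)
  qed
qed

lemma leaf_neighbour:
  assumes VH: "VH = {h}"
  shows "E (Inr (v, h)) b \<Longrightarrow> b = Inl v" and "E a (Inr (v, h)) \<Longrightarrow> a = Inl v"
proof -
  have no_edge: "\<not> EH h k" "\<not> EH k h" for k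
    using simple_H VH unfolding simple_graph_def by blast+
  show "E (Inr (v, h)) b \<Longrightarrow> b = Inl v" using edge_from_copy no_edge by blast
  show "E a (Inr (v, h)) \<Longrightarrow> a = Inl v" using edge_into_copy no_edge by blast
qed

lemma root_on_geodesic_to_leaf:
  assumes "VH = {h}" "u \<in> VG" "y \<in> V" "y \<noteq> Inr (u, h)"
  shows "on_geodesic V E (Inl u) y (Inr (u, h))"
proof (rule on_geodesic_to_pendant_vertex[OF corona_connected assms(3)])
  show "Inr (u, h) \<in> V" using assms(1,2) by (simp add: corona_V_def)
qed (use assms leaf_neighbour(2) in simp_all)

lemma root_on_geodesic_from_leaf:
  assumes "VH = {h}" "u \<in> VG" "z \<in> V" "z \<noteq> Inr (u, h)"
  shows "on_geodesic V E (Inl u) (Inr (u, h)) z"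
proof (rule on_geodesic_from_pendant_vertex[OF corona_connected _ assms(3)])
  show "Inr (u, h) \<in> V" using assms(1,2) by (simp add: corona_V_def)
qed (use assms leaf_neighbour(1) in simp_all)

lemma leaves_strong_resolving_set:
  assumes VH: "VH = {h}" and "w \<in> VG" "t \<in> VG" "t \<noteq> w"
  shows "strong_resolving_set V E (Inr ` (VG \<times> VH) - {Inr (w, h)})"
proof -
  let ?S = "Inr ` (VG \<times> VH) - {Inr (w, h)}"
  have resolved: "\<exists>z\<in>?S. on_geodesic V E x y z \<or> on_geodesic V E y x z"
    if xy: "x \<in> V" "y \<in> V" "x \<noteq> y" "x \<notin> ?S" "y \<notin> ?S" "x \<noteq> Inr (w, h)" for x y
  proof -
    have "x \<in> Inl ` VG" using xy(1,4,6) unfolding corona_V_def by blast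
    then obtain u where u: "x = Inl u" "u \<in> VG" by blast
    show ?thesis
    proof (cases "u = w")
      case False
      then have "Inr (u, h) \<in> ?S" using u(2) VH by simp
      moreover have "y \<noteq> Inr (u, h)" using xy(5) calculation by blast
      then have "on_geodesic V E x y (Inr (u, h))"
        using root_on_geodesic_to_leaf[OF VH u(2) xy(2)] u(1) by simp
      ultimately show ?thesis by (intro bexI[of _ "Inr (u, h)"] disjI1)
    next
      case True
      have "Inr (t, h) \<in> ?S" using assms(3,4) VH by simp
      have "y = Inr (w, h) \<or> y \<in> Inl ` VG" using xy(2,5) VH unfolding corona_V_def by blast
      then show ?thesis
      proof
        assume y: "y = Inr (w, h)"
        have "Inr (t, h) \<in> V" "Inr (t, h) \<noteq> Inr (w, h)"
          using assms(3,4) VH by (simp_all add: corona_V_def)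
        then have "on_geodesic V E x y (Inr (t, h))"
          using root_on_geodesic_from_leaf[OF VH assms(2)] y u(1) True by simp
        with \<open>Inr (t, h) \<in> ?S\<close> show ?thesis by (intro bexI[of _ "Inr (t, h)"] disjI1)
      next
        assume "y \<in> Inl ` VG"
        then obtain v where v: "y = Inl v" "v \<in> VG" by blast
        then have "Inr (v, h) \<in> ?S" using xy(3) u(1) True VH by auto
        moreover have "on_geodesic V E y x (Inr (v, h))"
          using root_on_geodesic_to_leaf[OF VH v(2) xy(1)] u(1) v(1) by simp
        ultimately show ?thesis by (intro bexI[of _ "Inr (v, h)"] disjI2)
      qed
    qed
  qed
  show ?thesis unfolding strong_resolving_set_def
  proof (intro conjI ballI impI)
    show "?S \<subseteq> V" by (auto simp: corona_V_def)
  next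
    fix x y assume xy: "x \<in> V" "y \<in> V" "x \<noteq> y"
    consider "x \<in> ?S" | "y \<in> ?S" | "x \<notin> ?S" "y \<notin> ?S" "x \<noteq> Inr (w, h)"
      | "x \<notin> ?S" "y \<notin> ?S" "y \<noteq> Inr (w, h)"
      using xy(3) by blast
    then show "\<exists>z\<in>?S. on_geodesic V E x y z \<or> on_geodesic V E y x z"
    proof cases
      case 1
      then show ?thesis using on_geodesic_endpoint[OF corona_connected xy(2,1)] by blast
    next
      case 2
      then show ?thesis using on_geodesic_endpoint[OF corona_connected xy(1,2)] by blast
    next
      case 3
      then show ?thesis using resolved[OF xy] by blast
    next
      case 4
      then show ?thesis using resolved[OF xy(2,1)] xy(3) by blast
    qed
  qed
qed

lemma corona_maker_wins:
  assumes "card VH = 1" "2 \<le> card VG" and few_leaves: "(card VG + (if t then 0 else 1)) div 2 \<le> 1"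
  shows "maker_wins (card V) t (strong_resolving_set V E) V {} {}"
proof (rule maker_wins_game_by_claiming[OF finite_V])
  obtain h where VH: "VH = {h}" using assms(1) card_1_singletonE by blast
  let ?L = "Inr ` (VG \<times> VH) :: ('a + 'a \<times> 'b) set"
  show "?L \<subseteq> V" by (auto simp: corona_V_def)
  have "card ?L = card VG * card VH" by (simp add: card_image card_cartesian_product)
  then show "(card ?L + (if t then 0 else 1)) div 2 \<le> 1" using few_leaves assms(1) by simp
  fix M' assume small: "card (?L - M') \<le> 1"
  obtain w where w: "w \<in> VG" "?L - M' \<subseteq> {Inr (w, h)}"
  proof (cases "?L - M' = {}")
    case True
    have "VG \<noteq> {}" using assms(2) by auto
    then show ?thesis using that True by blast
  next
    case False
    have "finite (?L - M')" using finite_VG VH by simp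
    then have "card (?L - M') = 1" using False small by (simp add: le_antisym Suc_le_eq card_gt_0_iff)
    then obtain l where l: "?L - M' = {l}" by (rule card_1_singletonE)
    then obtain w where "l = Inr (w, h)" "w \<in> VG" using VH by auto
    then show ?thesis using that l by simp
  qed
  obtain t where "t \<in> VG" "t \<noteq> w" using card_ge_2_obtain_other[OF assms(2), of w] by blast
  then have "strong_resolving_set V E (?L - {Inr (w, h)})"
    using leaves_strong_resolving_set[OF VH w(1)] by blast
  moreover have "?L - {Inr (w, h)} \<subseteq> M'" using w(2) by blast
  ultimately show "\<exists>S\<subseteq>M'. strong_resolving_set V E S" by blast
qed

end

theorem mainTheorem9:
  fixes VG :: "'a set" and EG :: "'a \<Rightarrow> 'a \<Rightarrow> bool"
    and VH :: "'b set" and EH :: "'b \<Rightarrow> 'b \<Rightarrow> bool"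
  assumes "simple_graph VG EG" and "connected_graph VG EG"
    and "simple_graph VH EH"
    and "card VG \<ge> 2" and "card VH \<ge> 1"
  shows "(card VG \<ge> 4 \<longrightarrow>
            O_SR (corona_V VG VH) (corona_E VG EG VH EH) = Out_B)
       \<and> (card VG = 3 \<longrightarrow>
            (card VH = 1 \<longrightarrow> O_SR (corona_V VG VH) (corona_E VG EG VH EH) = Out_N)
          \<and> (card VH \<ge> 2 \<longrightarrow> O_SR (corona_V VG VH) (corona_E VG EG VH EH) = Out_B))
       \<and> (card VG = 2 \<longrightarrow>
            (card VH = 1 \<longrightarrow> O_SR (corona_V VG VH) (corona_E VG EG VH EH) = Out_M)
          \<and> (card VH \<ge> 2 \<longrightarrow> O_SR (corona_V VG VH) (corona_E VG EG VH EH) = Out_B))"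
proof -
  interpret connected_corona VG EG VH EH using assms(1-3) by unfold_locales
  let ?W = "strong_resolving_set V E"
  have many_partners: "3 \<le> (card VG - 1) * card VH" if "4 \<le> card VG"
    using mult_le_mono[of 3 "card VG - 1" 1 "card VH"] assms(5) that by simp
  have M_lost: "\<not> maker_wins_M_game ?W V"
    if "3 \<le> (card VG - 1) * card VH + (if card VH = 2 then 1 else 0)"
    using corona_breaker_wins_M_game assms(4) that by blast
  have B_lost: "\<not> maker_wins_B_game ?W V" if "2 \<le> (card VG - 1) * card VH"
    using corona_breaker_wins_B_game that by blast
  have M_won: "maker_wins_M_game ?W V" if "card VH = 1" "card VG \<le> 3"
    using corona_maker_wins[of True] assms(4) that by (simp add: maker_wins_M_game_def)
  have B_won: "maker_wins_B_game ?W V" if "card VH = 1" "card VG = 2"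
    using corona_maker_wins[of False] that by (simp add: maker_wins_B_game_def)
  show ?thesis
    unfolding O_SR_def game_outcome_def
    using M_lost B_lost M_won B_won many_partners by auto
qed

end
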